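(* Let $\phi:\Omega^{even}(\mathbb{C}^n)^{\otimes 2}\to\Omega^{even}(\mathbb{C}^n)$ be the linear map $\phi(\omega_1\otimes\omega_2)=d\omega_1\wedge d\omega_2$. For any $i,j\in[1,n]$ and any $\omega_1,\omega_2\in\Omega^{even}(\mathbb{C}^n)$, the element $(x_{i1}-x_{i2})(x_{j1}-x_{j2})\,\omega_1\otimes\omega_2$ lies in the kernel of $\phi$. Consequently, for every $m\ge 2$, the submodule $(x_{i1}-x_{i2})(x_{j1}-x_{j2})\,\Omega^{mn}$ lies in the kernel of $\psi:\Omega^{mn}\to B_m(A_n)$.
   Context: $\Omega^{even}(\mathbb{C}^n)$ is the space of polynomial differential forms of even degree on $\mathbb{C}^n$ with coordinates $y_1,\dots,y_n$. For $m\ge 1$, $\Omega^{mn}:=\Omega^{even}(\mathbb{C}^n)^{\otimes m}$, which is a module over $\mathcal{O}_{mn}=\mathbb{C}[x_{ij}]_{1\le i\le n,1\le j\le m}$, where $x_{ij}$ acts by multiplication by the coordinate $y_i$ on the $j$-th tensor factor. $A_n$ is the free associative algebra on $n$ generators over $\mathbb{C}$, with lower central series $L_1=A_n$, $L_i=[A_n,L_{i-1}]$, $B_i(A_n)=L_i/L_{i+1}$; $\bar B_1(A_n)$ is the quotient of $B_1(A_n)=A_n/[A_n,A_n]$ by the image of $A_n[[A_n,A_n],A_n]A_n$, and the Lie bracket of $A_n$ induces brackets $\bar B_1\otimes \bar B_1\to B_2$, $B_i\otimes\bar B_1\to B_{i+1}$. By results of Feigin–Shoikhet there is a surjective linear map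 $\xi:\Omega^{even}(\mathbb{C}^n)\to\bar B_1(A_n)$ with kernel the exact even forms, and an isomorphism $\eta$ from the exact even forms of positive degree onto $B_2(A_n)$, such that $[\xi(\omega_1),\xi(\omega_2)]=\eta(d\omega_1\wedge d\omega_2)$. The map $\psi:\Omega^{mn}\to B_m(A_n)$ (for $m\ge2$) is defined by $\psi(\omega_1\otimes\cdots\otimes\omega_m)=[[\cdots[[b_1,b_2],b_3],\ldots],b_m]$ with $b_i=\xi(\omega_i)$. *)

theory Defs
  imports Complex_Main
begin

text \<open>A basis monomial (a, S) stands for y^a dy_{s1} wedge ... wedge dy_{sk}, where
  s1 < ... < sk are the elements of S.  Coordinates are indexed 0..n-1
  (the paper's y_1..y_n).\<close>

type_synonym mono = "(nat \<Rightarrow> nat) \<times> nat set"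
type_synonym form = "mono \<Rightarrow> complex"
type_synonym tensor = "mono list \<Rightarrow> complex"
type_synonym word = "nat list"
type_synonym nc = "word \<Rightarrow> complex"

definition supp :: "('a \<Rightarrow> complex) \<Rightarrow> 'a set" where
  "supp f = {x. f x \<noteq> 0}"

definition valid_mono :: "nat \<Rightarrow> mono \<Rightarrow> bool" where
  "valid_mono n u \<longleftrightarrow> (\<forall>k. n \<le> k \<longrightarrow> fst u k = 0) \<and> snd u \<subseteq> {..<n}"

definition is_form :: "nat \<Rightarrow> form \<Rightarrow> bool" where
  "is_form n \<omega> \<longleftrightarrow> finite (supp \<omega>) \<and> (\<forall>u\<in>supp \<omega>. valid_mono n u)"

definition even_form :: "nat \<Rightarrow> form \<Rightarrow> bool" where
  "even_form n \<omega> \<longleftrightarrow> is_form n \<omega> \<and> (\<forall>u\<in>supp \<omega>. even (card (snd u)))"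

definition bas :: "mono \<Rightarrow> form" where
  "bas u = (\<lambda>v. if v = u then 1 else 0)"

text \<open>de Rham differential: d(y^a dy_S) = sum_k a_k y^(a - e_k) dy_k wedge dy_S.\<close>
definition d_bas :: "mono \<Rightarrow> form" where
  "d_bas u = (\<lambda>v. \<Sum>k | k \<notin> snd u \<and> 0 < fst u k \<and>
        v = ((fst u)(k := fst u k - 1), insert k (snd u)).
        of_nat (fst u k) * (-1) ^ card {s \<in> snd u. s < k})"

definition dform :: "form \<Rightarrow> form" where
  "dform \<omega> = (\<lambda>v. \<Sum>u\<in>supp \<omega>. \<omega> u * d_bas u v)"

text \<open>Wedge product: (y^a dy_S) wedge (y^b dy_T) = sign * y^(a+b) dy_(S union T).\<close>
definition wedge_bas :: "mono \<Rightarrow> mono \<Rightarrow> form" where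
  "wedge_bas u w = (\<lambda>v. if snd u \<inter> snd w = {} \<and> v = ((\<lambda>k. fst u k + fst w k), snd u \<union> snd w)
      then (-1) ^ card {(s, t). s \<in> snd u \<and> t \<in> snd w \<and> t < s} else 0)"

definition wedge :: "form \<Rightarrow> form \<Rightarrow> form" where
  "wedge \<omega> \<eta> = (\<lambda>v. \<Sum>u\<in>supp \<omega>. \<Sum>w\<in>supp \<eta>. \<omega> u * \<eta> w * wedge_bas u w v)"

definition exact_form :: "nat \<Rightarrow> form \<Rightarrow> bool" where
  "exact_form n \<omega> \<longleftrightarrow> (\<exists>\<nu>. is_form n \<nu> \<and> \<omega> = dform \<nu>)"

definition exact_pos :: "nat \<Rightarrow> form \<Rightarrow> bool" where
  "exact_pos n \<omega> \<longleftrightarrow> exact_form n \<omega> \<and> (\<forall>u\<in>supp \<omega>. snd u \<noteq> {} \<and> even (card (snd u)))"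

text \<open>Elements of the m-th tensor power: coefficient functions on lists of m basis
  monomials (tensor factors indexed 0..m-1, the paper's 1..m).\<close>
definition is_tensor :: "nat \<Rightarrow> nat \<Rightarrow> tensor \<Rightarrow> bool" where
  "is_tensor n m T \<longleftrightarrow> finite (supp T) \<and>
     (\<forall>us\<in>supp T. length us = m \<and> (\<forall>u\<in>set us. valid_mono n u \<and> even (card (snd u))))"

definition tens :: "form list \<Rightarrow> tensor" where
  "tens \<omega>s = (\<lambda>us. if length us = length \<omega>s then (\<Prod>k<length \<omega>s. (\<omega>s ! k) (us ! k)) else 0)"

text \<open>Action of x_{ij}: multiplication by y_i on the j-th tensor factor.\<close>
definition xact :: "nat \<Rightarrow> nat \<Rightarrow> tensor \<Rightarrow> tensor" where
  "xact i j T = (\<lambda>us. if j < length us \<and> 0 < fst (us ! j) i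
      then T (us[j := ((fst (us ! j))(i := fst (us ! j) i - 1), snd (us ! j))]) else 0)"

definition xdiff :: "nat \<Rightarrow> tensor \<Rightarrow> tensor" where
  "xdiff i T = (\<lambda>us. xact i 0 T us - xact i 1 T us)"

definition phi :: "tensor \<Rightarrow> form" where
  "phi T = (\<lambda>v. \<Sum>us\<in>supp T. T us *
     (if length us = 2 then wedge (dform (bas (us ! 0))) (dform (bas (us ! 1))) v else 0))"

definition is_alg :: "nat \<Rightarrow> nc \<Rightarrow> bool" where
  "is_alg n p \<longleftrightarrow> finite (supp p) \<and> (\<forall>w\<in>supp p. set w \<subseteq> {..<n})"

definition amul :: "nc \<Rightarrow> nc \<Rightarrow> nc" where
  "amul p q = (\<lambda>w. \<Sum>k\<le>length w. p (take k w) * q (drop k w))"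

definition acomm :: "nc \<Rightarrow> nc \<Rightarrow> nc" where
  "acomm p q = (\<lambda>w. amul p q w - amul q p w)"

inductive lcs :: "nat \<Rightarrow> nat \<Rightarrow> nc \<Rightarrow> bool" for n where
  base: "is_alg n p \<Longrightarrow> lcs n 1 p"
| comm: "is_alg n a \<Longrightarrow> lcs n k b \<Longrightarrow> 1 \<le> k \<Longrightarrow> lcs n (Suc k) (acomm a b)"
| zero: "1 \<le> k \<Longrightarrow> lcs n k (\<lambda>_. 0)"
| add: "lcs n k p \<Longrightarrow> lcs n k q \<Longrightarrow> lcs n k (\<lambda>w. p w + q w)"
| smult: "lcs n k p \<Longrightarrow> lcs n k (\<lambda>w. c * p w)"

text \<open>Mset n p: p lies in [A_n,A_n] + A_n [[A_n,A_n],A_n] A_n, so that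
  bar B_1(A_n) = A_n / Mset.\<close>
inductive Mset :: "nat \<Rightarrow> nc \<Rightarrow> bool" for n where
  l2: "lcs n 2 p \<Longrightarrow> Mset n p"
| ideal: "is_alg n a \<Longrightarrow> lcs n 3 b \<Longrightarrow> is_alg n c \<Longrightarrow> Mset n (amul a (amul b c))"
| add: "Mset n p \<Longrightarrow> Mset n q \<Longrightarrow> Mset n (\<lambda>w. p w + q w)"
| smult: "Mset n p \<Longrightarrow> Mset n (\<lambda>w. c * p w)"

text \<open>xi and eta are given by representatives (lifts) in A_n:  xi w is a lift of
  xi(w) in bar B_1, eta w a lift of eta(w) in B_2 = L_2/L_3.\<close>
definition FS_data :: "nat \<Rightarrow> (form \<Rightarrow> nc) \<Rightarrow> (form \<Rightarrow> nc) \<Rightarrow> bool" where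
  "FS_data n \<xi> \<eta> \<longleftrightarrow>
     (\<forall>\<omega>. even_form n \<omega> \<longrightarrow> is_alg n (\<xi> \<omega>)) \<and>
     (\<forall>\<omega> \<omega>'. even_form n \<omega> \<longrightarrow> even_form n \<omega>' \<longrightarrow>
        Mset n (\<lambda>w. \<xi> (\<lambda>v. \<omega> v + \<omega>' v) w - \<xi> \<omega> w - \<xi> \<omega>' w)) \<and>
     (\<forall>c \<omega>. even_form n \<omega> \<longrightarrow> Mset n (\<lambda>w. \<xi> (\<lambda>v. c * \<omega> v) w - c * \<xi> \<omega> w)) \<and>
     (\<forall>p. is_alg n p \<longrightarrow> (\<exists>\<omega>. even_form n \<omega> \<and> Mset n (\<lambda>w. p w - \<xi> \<omega> w))) \<and>
     (\<forall>\<omega>. even_form n \<omega> \<longrightarrow> (Mset n (\<xi> \<omega>) \<longleftrightarrow> exact_form n \<omega>)) \<and>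
     (\<forall>\<omega>. exact_pos n \<omega> \<longrightarrow> lcs n 2 (\<eta> \<omega>)) \<and>
     (\<forall>\<omega> \<omega>'. exact_pos n \<omega> \<longrightarrow> exact_pos n \<omega>' \<longrightarrow>
        lcs n 3 (\<lambda>w. \<eta> (\<lambda>v. \<omega> v + \<omega>' v) w - \<eta> \<omega> w - \<eta> \<omega>' w)) \<and>
     (\<forall>c \<omega>. exact_pos n \<omega> \<longrightarrow> lcs n 3 (\<lambda>w. \<eta> (\<lambda>v. c * \<omega> v) w - c * \<eta> \<omega> w)) \<and>
     (\<forall>\<omega>. exact_pos n \<omega> \<longrightarrow> lcs n 3 (\<eta> \<omega>) \<longrightarrow> \<omega> = (\<lambda>_. 0)) \<and>
     (\<forall>p. lcs n 2 p \<longrightarrow> (\<exists>\<omega>. exact_pos n \<omega> \<and> lcs n 3 (\<lambda>w. p w - \<eta> \<omega> w))) \<and>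
     (\<forall>\<omega>1 \<omega>2. even_form n \<omega>1 \<longrightarrow> even_form n \<omega>2 \<longrightarrow>
        lcs n 3 (\<lambda>w. acomm (\<xi> \<omega>1) (\<xi> \<omega>2) w - \<eta> (wedge (dform \<omega>1) (dform \<omega>2)) w))"

fun iterbr :: "nc list \<Rightarrow> nc" where
  "iterbr [] = (\<lambda>_. 0)"
| "iterbr (b # bs) = foldl acomm b bs"

text \<open>A representative in L_m of psi(T) in B_m = L_m / L_(m+1), via linear extension
  from basis tensors.\<close>
definition psi :: "(form \<Rightarrow> nc) \<Rightarrow> tensor \<Rightarrow> nc" where
  "psi \<xi> T = (\<lambda>w. \<Sum>us\<in>supp T. T us * iterbr (map (\<lambda>u. \<xi> (bas u)) us) w)"

end

theory Submission
  imports Defs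
begin

text \<open>For basis monomials \<open>u = y\<^sup>a dy\<^sub>S\<close> and \<open>w = y\<^sup>b dy\<^sub>T\<close>,
  \<open>du \<and> dw = \<Sum>\<^sub>k\<^sub>,\<^sub>l a\<^sub>k b\<^sub>l D\<^sub>k\<^sub>l\<close>, where \<open>D\<^sub>k\<^sub>l\<close> depends only on
  \<open>a + b\<close>, \<open>S\<close>, \<open>T\<close> and is antisymmetric in \<open>(k, l)\<close>.  Applying
  \<open>(x\<^sub>i\<^sub>1 - x\<^sub>i\<^sub>2)(x\<^sub>j\<^sub>1 - x\<^sub>j\<^sub>2)\<close> to \<open>u \<otimes> w\<close> keeps \<open>a + b\<close> the same in all
  four terms and turns the coefficient \<open>a\<^sub>k b\<^sub>l\<close> into
  \<open>-(\<delta>\<^sub>k\<^sub>i \<delta>\<^sub>l\<^sub>j + \<delta>\<^sub>k\<^sub>j \<delta>\<^sub>l\<^sub>i)\<close>, which is symmetric in \<open>(k, l)\<close>; so the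
  result lies in the kernel of \<open>\<phi>\<close>.  For \<open>\<psi>\<close>: modulo \<open>L\<^sub>3\<close>,
  \<open>[\<xi>(u), \<xi>(w)] = \<eta>(du \<and> dw)\<close>, and \<open>\<eta>\<close> is linear on exact forms, which
  \<open>du \<and> dw = d(u \<and> dw)\<close> is.  Hence the bracket of the first two factors of
  \<open>(x\<^sub>i\<^sub>1 - x\<^sub>i\<^sub>2)(x\<^sub>j\<^sub>1 - x\<^sub>j\<^sub>2)(u\<^sub>1 \<otimes> \<dots> \<otimes> u\<^sub>m)\<close> lies in \<open>L\<^sub>3\<close>, and
  bracketing with the remaining \<open>m - 2\<close> factors lands in \<open>L\<^sub>m\<^sub>+\<^sub>1\<close>.\<close>

section \<open>Linear extension from basis elements\<close>

definition lin_ext :: "('a \<Rightarrow> 'b \<Rightarrow> complex) \<Rightarrow> ('a \<Rightarrow> complex) \<Rightarrow> 'b \<Rightarrow> complex" where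
  "lin_ext F f = (\<lambda>v. \<Sum>u\<in>supp f. f u * F u v)"

definition lin_comb :: "'k set \<Rightarrow> ('k \<Rightarrow> complex) \<Rightarrow> ('k \<Rightarrow> 'a) \<Rightarrow> 'a \<Rightarrow> complex" where
  "lin_comb K c X = (\<lambda>x. \<Sum>k\<in>K. if X k = x then c k else 0)"

lemma supp_lin_comb: "supp (lin_comb K c X) \<subseteq> X ` K"
proof
  fix x assume "x \<in> supp (lin_comb K c X)"
  then obtain k where "k \<in> K" "(if X k = x then c k else 0) \<noteq> 0"
    unfolding supp_def lin_comb_def by (auto dest: sum.not_neutral_contains_not_neutral)
  then show "x \<in> X ` K" by (auto split: if_splits)
qed

lemma finite_supp_lin_comb: "finite K \<Longrightarrow> finite (supp (lin_comb K c X))"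
  by (rule finite_subset[OF supp_lin_comb]) simp

lemma finite_supp_diff: "finite (supp f) \<Longrightarrow> finite (supp g) \<Longrightarrow> finite (supp (\<lambda>x. f x - g x))"
  by (rule finite_subset[of _ "supp f \<union> supp g"]) (auto simp: supp_def)

lemma lin_ext_superset:
  assumes "finite A" "supp f \<subseteq> A"
  shows "lin_ext F f v = (\<Sum>u\<in>A. f u * F u v)"
  unfolding lin_ext_def
  by (rule sum.mono_neutral_left) (use assms in \<open>auto simp: supp_def\<close>)

lemma lin_ext_lin_comb:
  assumes "finite K"
  shows "lin_ext F (lin_comb K c X) v = (\<Sum>k\<in>K. c k * F (X k) v)"
proof -
  have "lin_ext F (lin_comb K c X) v = (\<Sum>x\<in>X ` K. lin_comb K c X x * F x v)"
    using assms supp_lin_comb[of K c X] by (simp add: lin_ext_superset)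
  also have "\<dots> = (\<Sum>x\<in>X ` K. \<Sum>k\<in>K. if X k = x then c k * F x v else 0)"
    unfolding lin_comb_def sum_distrib_right by (intro sum.cong) auto
  also have "\<dots> = (\<Sum>k\<in>K. \<Sum>x\<in>X ` K. if X k = x then c k * F x v else 0)"
    by (rule sum.swap)
  also have "\<dots> = (\<Sum>k\<in>K. c k * F (X k) v)"
    using assms by (intro sum.cong) auto
  finally show ?thesis .
qed

lemma lin_ext_diff:
  assumes "finite (supp f)" "finite (supp g)"
  shows "lin_ext F (\<lambda>x. f x - g x) v = lin_ext F f v - lin_ext F g v"
proof -
  let ?A = "supp f \<union> supp g"
  have "lin_ext F (\<lambda>x. f x - g x) v = (\<Sum>u\<in>?A. (f u - g u) * F u v)"
    using assms by (intro lin_ext_superset) (auto simp: supp_def)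
  also have "\<dots> = (\<Sum>u\<in>?A. f u * F u v) - (\<Sum>u\<in>?A. g u * F u v)"
    by (simp add: left_diff_distrib sum_subtractf)
  also have "(\<Sum>u\<in>?A. f u * F u v) = lin_ext F f v"
    using assms by (intro lin_ext_superset[symmetric]) auto
  also have "(\<Sum>u\<in>?A. g u * F u v) = lin_ext F g v"
    using assms by (intro lin_ext_superset[symmetric]) auto
  finally show ?thesis .
qed

lemma supp_bas: "supp (bas u) = {u}"
  by (auto simp: supp_def bas_def)

lemma lin_ext_bas: "lin_ext F (bas u) = F u"
  by (simp add: lin_ext_def supp_bas) (simp add: bas_def)

lemma lin_comb_supp_self: "finite (supp f) \<Longrightarrow> lin_comb (supp f) f id = f"
  by (auto simp: lin_comb_def fun_eq_iff sum.delta' supp_def)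

lemma dform_eq_lin_ext: "dform = lin_ext d_bas"
  by (simp add: dform_def lin_ext_def fun_eq_iff)

lemma wedge_eq_lin_ext: "wedge f g v = lin_ext (\<lambda>u v. lin_ext (wedge_bas u) g v) f v"
  unfolding wedge_def lin_ext_def by (simp add: sum_distrib_left mult.assoc)

lemma phi_eq_lin_ext:
  "phi = lin_ext (\<lambda>us. if length us = 2 then wedge (dform (bas (us ! 0))) (dform (bas (us ! 1)))
                      else (\<lambda>_. 0))"
  unfolding phi_def lin_ext_def fun_eq_iff by (intro allI sum.cong refl) simp

lemma psi_eq_lin_ext: "psi \<xi> = lin_ext (\<lambda>us. iterbr (map (\<lambda>u. \<xi> (bas u)) us))"
  by (simp add: psi_def lin_ext_def fun_eq_iff)

section \<open>Signs of wedge products\<close>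

definition count_below :: "nat set \<Rightarrow> nat \<Rightarrow> nat" where
  "count_below S k = card {s\<in>S. s < k}"

definition count_above :: "nat set \<Rightarrow> nat \<Rightarrow> nat" where
  "count_above S k = card {s\<in>S. k < s}"

definition inversions :: "nat set \<Rightarrow> nat set \<Rightarrow> nat" where
  "inversions A B = card {(s, t). s \<in> A \<and> t \<in> B \<and> t < s}"

lemma count_below_add_above:
  assumes "finite S" "k \<notin> S"
  shows "count_below S k + count_above S k = card S"
proof -
  have "S = {s\<in>S. s < k} \<union> {s\<in>S. k < s}"
    using assms(2) by (auto, metis linorder_neqE_nat)
  moreover have "card ({s\<in>S. s < k} \<union> {s\<in>S. k < s}) = card {s\<in>S. s < k} + card {s\<in>S. k < s}"
    using assms(1) by (intro card_Un_disjoint) auto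
  ultimately show ?thesis
    by (simp add: count_below_def count_above_def)
qed

lemma count_below_insert:
  "finite T \<Longrightarrow> l \<notin> T \<Longrightarrow> count_below (insert l T) k = count_below T k + (if l < k then 1 else 0)"
proof -
  assume "finite T" "l \<notin> T"
  moreover have "{s\<in>insert l T. s < k} = (if l < k then insert l {s\<in>T. s < k} else {s\<in>T. s < k})"
    by auto
  ultimately show ?thesis by (simp add: count_below_def)
qed

lemma count_below_Un:
  "finite A \<Longrightarrow> finite B \<Longrightarrow> A \<inter> B = {} \<Longrightarrow> count_below (A \<union> B) k = count_below A k + count_below B k"
proof -
  assume "finite A" "finite B" "A \<inter> B = {}"
  moreover have "{s\<in>A \<union> B. s < k} = {s\<in>A. s < k} \<union> {s\<in>B. s < k}"
    by auto
  ultimately show ?thesis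
    by (simp add: count_below_def card_Un_disjoint disjoint_iff)
qed

lemma finite_inversion_pairs: "finite A \<Longrightarrow> finite B \<Longrightarrow> finite {(s, t). s \<in> A \<and> t \<in> B \<and> t < s}"
  by (rule finite_subset[of _ "A \<times> B"]) auto

lemma inversions_insert_left:
  assumes "finite A" "finite B" "k \<notin> A"
  shows "inversions (insert k A) B = inversions A B + count_below B k"
proof -
  have eq: "{(s, t). s \<in> insert k A \<and> t \<in> B \<and> t < s}
      = {(s, t). s \<in> A \<and> t \<in> B \<and> t < s} \<union> Pair k ` {t\<in>B. t < k}" by auto
  have "{(s, t). s \<in> A \<and> t \<in> B \<and> t < s} \<inter> Pair k ` {t\<in>B. t < k} = {}"
    using assms(3) by auto
  moreover have "card (Pair k ` {t\<in>B. t < k}) = card {t\<in>B. t < k}"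
    by (rule card_image) (auto simp: inj_on_def)
  ultimately show ?thesis
    unfolding inversions_def count_below_def eq
    using assms finite_inversion_pairs[OF assms(1,2)] by (simp add: card_Un_disjoint)
qed

lemma inversions_insert_right:
  assumes "finite A" "finite B" "l \<notin> B"
  shows "inversions A (insert l B) = inversions A B + count_above A l"
proof -
  have eq: "{(s, t). s \<in> A \<and> t \<in> insert l B \<and> t < s}
      = {(s, t). s \<in> A \<and> t \<in> B \<and> t < s} \<union> (\<lambda>s. (s, l)) ` {s\<in>A. l < s}" by auto
  have "{(s, t). s \<in> A \<and> t \<in> B \<and> t < s} \<inter> (\<lambda>s. (s, l)) ` {s\<in>A. l < s} = {}"
    using assms(3) by auto
  moreover have "card ((\<lambda>s. (s, l)) ` {s\<in>A. l < s}) = card {s\<in>A. l < s}"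
    by (rule card_image) (auto simp: inj_on_def)
  ultimately show ?thesis
    unfolding inversions_def count_above_def eq
    using assms finite_inversion_pairs[OF assms(1,2)] by (simp add: card_Un_disjoint)
qed

text \<open>The sign of \<open>(dy\<^sub>k \<and> dy\<^sub>S) \<and> (dy\<^sub>l \<and> dy\<^sub>T)\<close> in the
  increasingly ordered basis.\<close>
definition pair_sign :: "nat set \<Rightarrow> nat set \<Rightarrow> nat \<Rightarrow> nat \<Rightarrow> complex" where
  "pair_sign S T k l = (-1) ^ (count_below S k + count_below T l + inversions (insert k S) (insert l T))"

lemma inversions_insert_insert:
  assumes "finite S" "finite T" "k \<notin> S" "l \<notin> T"
  shows "inversions (insert k S) (insert l T)
       = inversions S T + count_above S l + count_below T k + (if l < k then 1 else 0)"
proof -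
  have "inversions (insert k S) (insert l T) = inversions S (insert l T) + count_below (insert l T) k"
    using assms by (simp add: inversions_insert_left)
  then show ?thesis
    using assms by (simp add: inversions_insert_right count_below_insert)
qed

lemma pair_sign_swap:
  assumes "finite S" "finite T" "k \<notin> S" "k \<notin> T" "l \<notin> S" "l \<notin> T" "k \<noteq> l"
  shows "pair_sign S T k l = - pair_sign S T l k"
proof -
  have "count_below S k + count_above S k = card S" "count_below S l + count_above S l = card S"
    using assms by (simp_all add: count_below_add_above)
  moreover have "inversions (insert k S) (insert l T)
      = inversions S T + count_above S l + count_below T k + (if l < k then 1 else 0)"
    "inversions (insert l S) (insert k T)
      = inversions S T + count_above S k + count_below T l + (if k < l then 1 else 0)"
    using assms by (simp_all add: inversions_insert_insert)
  ultimately have "(count_below S k + count_below T l + inversions (insert k S) (insert l T))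
      + (count_below S l + count_below T k + inversions (insert l S) (insert k T))
      = 2 * (card S + count_below T k + count_below T l + inversions S T) + 1"
    using assms(7) by auto
  then have "odd ((count_below S k + count_below T l + inversions (insert k S) (insert l T))
      + (count_below S l + count_below T k + inversions (insert l S) (insert k T)))"
    by presburger
  then show ?thesis
    unfolding pair_sign_def by (auto simp: minus_one_power_iff)
qed

text \<open>The same sign, as it arises in \<open>d(y\<^sup>a dy\<^sub>S \<and> dy\<^sub>l \<and> dy\<^sub>T)\<close>.\<close>
lemma pair_sign_eq_d_wedge_sign:
  assumes "finite S" "finite T" "S \<inter> T = {}" "k \<notin> S" "k \<notin> T" "l \<notin> S" "l \<notin> T"
  shows "pair_sign S T k l
       = (-1) ^ (count_below T l + inversions S (insert l T) + count_below (S \<union> insert l T) k)"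
proof -
  have "inversions (insert k S) (insert l T)
      = inversions S T + count_above S l + count_below T k + (if l < k then 1 else 0)"
    using assms by (simp add: inversions_insert_insert)
  moreover have "inversions S (insert l T) = inversions S T + count_above S l"
    "count_below (S \<union> insert l T) k = count_below S k + count_below T k + (if l < k then 1 else 0)"
    using assms by (simp_all add: inversions_insert_right count_below_Un count_below_insert)
  ultimately show ?thesis
    unfolding pair_sign_def by (simp add: ac_simps)
qed

section \<open>The form \<open>du \<and> dw\<close> for basis monomials\<close>

lemma finite_snd_valid_mono: "valid_mono n u \<Longrightarrow> finite (snd u)"
  unfolding valid_mono_def using finite_subset by blast

definition d_coeff :: "mono \<Rightarrow> nat \<Rightarrow> complex" where
  "d_coeff u k = (if k \<notin> snd u then of_nat (fst u k) * (-1) ^ count_below (snd u) k else 0)"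

definition d_mono :: "mono \<Rightarrow> nat \<Rightarrow> mono" where
  "d_mono u k = ((fst u)(k := fst u k - 1), insert k (snd u))"

lemma d_bas_eq_lin_comb:
  assumes "valid_mono n u"
  shows "d_bas u = lin_comb {..<n} (d_coeff u) (d_mono u)"
proof
  fix v
  let ?P = "\<lambda>k. k \<notin> snd u \<and> 0 < fst u k \<and> v = d_mono u k"
  let ?c = "\<lambda>k. of_nat (fst u k) * (-1) ^ count_below (snd u) k :: complex"
  have "lin_comb {..<n} (d_coeff u) (d_mono u) v = (\<Sum>k\<in>{..<n}. if ?P k then ?c k else 0)"
    unfolding lin_comb_def by (rule sum.cong) (auto simp: d_coeff_def)
  also have "\<dots> = sum ?c {k\<in>{..<n}. ?P k}"
    by (rule sum.inter_filter[symmetric]) simp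
  also have "{k\<in>{..<n}. ?P k} = {k. ?P k}"
    using assms by (auto simp: valid_mono_def not_less[symmetric])
  also have "sum ?c {k. ?P k} = d_bas u v"
    by (simp add: d_bas_def count_below_def d_mono_def)
  finally show "d_bas u v = lin_comb {..<n} (d_coeff u) (d_mono u) v" ..
qed

lemma dform_bas: "dform (bas u) = d_bas u"
  by (simp add: dform_eq_lin_ext lin_ext_bas)

definition mono_mult :: "mono \<Rightarrow> mono \<Rightarrow> mono" where
  "mono_mult u w = ((\<lambda>k. fst u k + fst w k), snd u \<union> snd w)"

definition wedge_coeff :: "mono \<Rightarrow> mono \<Rightarrow> complex" where
  "wedge_coeff u w = (if snd u \<inter> snd w = {} then (-1) ^ inversions (snd u) (snd w) else 0)"

lemma wedge_bas_eq: "wedge_bas u w v = wedge_coeff u w * bas (mono_mult u w) v"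
  by (simp add: wedge_bas_def wedge_coeff_def mono_mult_def bas_def inversions_def)

text \<open>The coefficient of \<open>v\<close> in \<open>y\<^sup>a\<^sup>-\<^sup>e\<^sup>k\<^sup>-\<^sup>e\<^sup>l dy\<^sub>k dy\<^sub>S \<and> dy\<^sub>l dy\<^sub>T\<close>:
  the \<open>(k, l)\<close> term of \<open>du \<and> dw\<close>, up to the factor \<open>a\<^sub>k b\<^sub>l\<close>.\<close>
definition dwedge_term :: "nat set \<Rightarrow> nat set \<Rightarrow> (nat \<Rightarrow> nat) \<Rightarrow> nat \<Rightarrow> nat \<Rightarrow> mono \<Rightarrow> complex" where
  "dwedge_term S T a k l v =
     (if k \<notin> S \<and> l \<notin> T \<and> insert k S \<inter> insert l T = {} \<and>
         v = (\<lambda>m. a m - ((if m = k then 1 else 0) + (if m = l then 1 else 0)), insert k S \<union> insert l T)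
      then pair_sign S T k l else 0)"

lemma dwedge_term_swap:
  assumes "finite S" "finite T"
  shows "dwedge_term S T a k l v = - dwedge_term S T a l k v"
proof -
  have cond: "(k \<notin> S \<and> l \<notin> T \<and> insert k S \<inter> insert l T = {}) \<longleftrightarrow>
              (l \<notin> S \<and> k \<notin> T \<and> insert l S \<inter> insert k T = {})" by auto
  have mono: "(\<lambda>m. a m - ((if m = k then 1 else 0) + (if m = l then 1 else 0)), insert k S \<union> insert l T)
            = (\<lambda>m. a m - ((if m = l then 1 else 0) + (if m = k then 1 else 0)), insert l S \<union> insert k T)"
    by (auto simp: fun_eq_iff)
  show ?thesis
  proof (cases "k \<notin> S \<and> l \<notin> T \<and> insert k S \<inter> insert l T = {}")
    case True
    then have "pair_sign S T k l = - pair_sign S T l k"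
      using assms by (intro pair_sign_swap) auto
    with True cond show ?thesis unfolding dwedge_term_def mono by auto
  next
    case False
    with cond show ?thesis unfolding dwedge_term_def by auto
  qed
qed

definition dwedge :: "mono \<Rightarrow> mono \<Rightarrow> form" where
  "dwedge u w = wedge (dform (bas u)) (dform (bas w))"

lemma d_coeff_wedge_d_mono:
  "d_coeff u k * d_coeff w l * wedge_bas (d_mono u k) (d_mono w l) v
   = of_nat (fst u k) * of_nat (fst w l) * dwedge_term (snd u) (snd w) (\<lambda>m. fst u m + fst w m) k l v"
proof (cases "fst u k = 0 \<or> fst w l = 0 \<or> \<not> (k \<notin> snd u \<and> l \<notin> snd w \<and> insert k (snd u) \<inter> insert l (snd w) = {})")
  case True
  then show ?thesis by (auto simp: d_coeff_def dwedge_term_def wedge_bas_def d_mono_def)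
next
  case False
  then have "(\<lambda>m. fst (d_mono u k) m + fst (d_mono w l) m)
       = (\<lambda>m. fst u m + fst w m - ((if m = k then 1 else 0) + (if m = l then 1 else 0)))"
    by (auto simp: d_mono_def fun_eq_iff)
  with False show ?thesis
    by (simp add: wedge_bas_def dwedge_term_def d_coeff_def d_mono_def pair_sign_def inversions_def power_add)
qed

lemma dwedge_eq_sum:
  assumes "valid_mono n u" "valid_mono n w"
  shows "dwedge u w v = (\<Sum>k<n. \<Sum>l<n. of_nat (fst u k) * of_nat (fst w l)
                            * dwedge_term (snd u) (snd w) (\<lambda>m. fst u m + fst w m) k l v)"
proof -
  have "dwedge u w v = (\<Sum>k<n. \<Sum>l<n. d_coeff u k * d_coeff w l * wedge_bas (d_mono u k) (d_mono w l) v)"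
    by (simp add: dwedge_def dform_bas d_bas_eq_lin_comb[OF assms(1)] d_bas_eq_lin_comb[OF assms(2)]
        wedge_eq_lin_ext lin_ext_lin_comb sum_distrib_left mult.assoc)
  then show ?thesis by (simp add: d_coeff_wedge_d_mono)
qed

lemma double_sum_antisym:
  fixes g :: "'a \<Rightarrow> 'a \<Rightarrow> 'b :: field_char_0"
  assumes "\<And>k l. g k l = - g l k"
  shows "(\<Sum>k\<in>A. \<Sum>l\<in>A. g k l) = 0"
proof -
  have "(\<Sum>k\<in>A. \<Sum>l\<in>A. g k l) = (\<Sum>l\<in>A. \<Sum>k\<in>A. g k l)"
    by (rule sum.swap)
  also have "\<dots> = (\<Sum>l\<in>A. \<Sum>k\<in>A. - g l k)"
    by (intro sum.cong refl assms)
  also have "\<dots> = - (\<Sum>k\<in>A. \<Sum>l\<in>A. g k l)"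
    by (simp add: sum_negf)
  finally show ?thesis
    by (simp add: eq_neg_iff_add_eq_0)
qed

definition mult_y :: "nat \<Rightarrow> mono \<Rightarrow> mono" where
  "mult_y i u = ((fst u)(i := fst u i + 1), snd u)"

lemma snd_mult_y [simp]: "snd (mult_y i u) = snd u"
  by (simp add: mult_y_def)

lemma valid_mono_mult_y: "i < n \<Longrightarrow> valid_mono n u \<Longrightarrow> valid_mono n (mult_y i u)"
  by (simp add: valid_mono_def mult_y_def)

text \<open>\<open>G\<close> applied to \<open>(x\<^sub>i\<^sub>1 - x\<^sub>i\<^sub>2)(x\<^sub>j\<^sub>1 - x\<^sub>j\<^sub>2) (u \<otimes> w)\<close>.\<close>
definition xdiff2_pair :: "nat \<Rightarrow> nat \<Rightarrow> (mono \<Rightarrow> mono \<Rightarrow> 'b \<Rightarrow> complex) \<Rightarrow> mono \<Rightarrow> mono \<Rightarrow> 'b \<Rightarrow> complex" where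
  "xdiff2_pair i j G u w =
     (\<lambda>v. (G (mult_y i (mult_y j u)) w v - G (mult_y i u) (mult_y j w) v)
        - (G (mult_y j u) (mult_y i w) v - G u (mult_y i (mult_y j w)) v))"

lemma dwedge_xdiff2_cancel:
  assumes u: "valid_mono n u" and w: "valid_mono n w" and ij: "i < n" "j < n"
  shows "xdiff2_pair i j dwedge u w = (\<lambda>_. 0)"
proof
  fix v
  define a where "a m = fst u m + fst w m + (if m = i then 1 else 0) + (if m = j then 1 else 0)" for m
  define D where "D k l = dwedge_term (snd u) (snd w) a k l v" for k l
  have expand: "dwedge u' w' v = (\<Sum>k<n. \<Sum>l<n. of_nat (fst u' k) * of_nat (fst w' l) * D k l)"
    if "valid_mono n u'" "valid_mono n w'" "snd u' = snd u" "snd w' = snd w"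
      "(\<lambda>m. fst u' m + fst w' m) = a" for u' w'
    using dwedge_eq_sum[OF that(1,2)] that(3-5) by (simp add: D_def)
  have exps: "(\<lambda>m. fst (mult_y i (mult_y j u)) m + fst w m) = a"
    "(\<lambda>m. fst (mult_y i u) m + fst (mult_y j w) m) = a"
    "(\<lambda>m. fst (mult_y j u) m + fst (mult_y i w) m) = a"
    "(\<lambda>m. fst u m + fst (mult_y i (mult_y j w)) m) = a"
    by (auto simp: a_def mult_y_def fun_eq_iff)
  define c :: "nat \<Rightarrow> nat \<Rightarrow> complex" where
    "c k l = (of_nat (fst (mult_y i (mult_y j u)) k) * of_nat (fst w l)
           - of_nat (fst (mult_y i u) k) * of_nat (fst (mult_y j w) l))
           - (of_nat (fst (mult_y j u) k) * of_nat (fst (mult_y i w) l)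
           - of_nat (fst u k) * of_nat (fst (mult_y i (mult_y j w)) l))" for k l
  have "xdiff2_pair i j dwedge u w v = (\<Sum>k<n. \<Sum>l<n. c k l * D k l)"
    unfolding xdiff2_pair_def c_def
    using u w ij exps
    by (simp add: expand valid_mono_mult_y sum_subtractf[symmetric] left_diff_distrib)
  also have "\<dots> = 0"
  proof (rule double_sum_antisym)
    fix k l
    have "c k l = c l k"
      unfolding c_def mult_y_def
      by (cases "k = i"; cases "k = j"; cases "l = i"; cases "l = j") (simp_all add: algebra_simps)
    moreover have "D k l = - D l k"
      unfolding D_def using u w
      by (intro dwedge_term_swap) (simp_all add: finite_snd_valid_mono)
    ultimately show "c k l * D k l = - (c l k * D l k)" by simp
  qed
  finally show "xdiff2_pair i j dwedge u w v = 0" .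
qed

section \<open>Exact forms\<close>

lemma valid_mono_d_mono: "valid_mono n w \<Longrightarrow> l < n \<Longrightarrow> valid_mono n (d_mono w l)"
  by (simp add: valid_mono_def d_mono_def)

lemma valid_mono_mono_mult: "valid_mono n u \<Longrightarrow> valid_mono n w \<Longrightarrow> valid_mono n (mono_mult u w)"
  by (simp add: valid_mono_def mono_mult_def)

lemma wedge_bas_lin_comb:
  assumes "finite K"
  shows "wedge (bas u) (lin_comb K c X)
       = lin_comb K (\<lambda>k. c k * wedge_coeff u (X k)) (\<lambda>k. mono_mult u (X k))"
proof
  fix v
  have "wedge (bas u) (lin_comb K c X) v = (\<Sum>k\<in>K. c k * wedge_bas u (X k) v)"
    using assms by (simp add: wedge_eq_lin_ext lin_ext_bas lin_ext_lin_comb)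
  also have "\<dots> = lin_comb K (\<lambda>k. c k * wedge_coeff u (X k)) (\<lambda>k. mono_mult u (X k)) v"
    unfolding lin_comb_def wedge_bas_eq by (intro sum.cong) (auto simp: bas_def)
  finally show "wedge (bas u) (lin_comb K c X) v = \<dots>" .
qed

lemma wedge_bas_dform_bas:
  assumes "valid_mono n w"
  shows "wedge (bas u) (dform (bas w))
       = lin_comb {..<n} (\<lambda>l. d_coeff w l * wedge_coeff u (d_mono w l)) (\<lambda>l. mono_mult u (d_mono w l))"
  by (simp add: dform_bas d_bas_eq_lin_comb[OF assms] wedge_bas_lin_comb)

lemma is_form_wedge_bas_dform_bas:
  assumes "valid_mono n u" "valid_mono n w"
  shows "is_form n (wedge (bas u) (dform (bas w)))"
  using supp_lin_comb[of "{..<n}" "\<lambda>l. d_coeff w l * wedge_coeff u (d_mono w l)" "\<lambda>l. mono_mult u (d_mono w l)"]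
  unfolding is_form_def wedge_bas_dform_bas[OF assms(2)]
  by (auto simp: finite_supp_lin_comb assms valid_mono_d_mono valid_mono_mono_mult)

lemma d_wedge_dform_term:
  assumes "finite (snd u)" "finite (snd w)"
  shows "d_coeff w l * wedge_coeff u (d_mono w l)
         * (if d_mono (mono_mult u (d_mono w l)) k = v then d_coeff (mono_mult u (d_mono w l)) k else 0)
       = of_nat (fst w l) * (of_nat (fst u k) + of_nat (fst w k))
         * dwedge_term (snd u) (snd w) (\<lambda>m. fst u m + fst w m) k l v"
    (is "?c * ?e = ?rhs")
proof -
  define S T where "S = snd u" and "T = snd w"
  define p where "p = mono_mult u (d_mono w l)"
  have snd_p: "snd p = S \<union> insert l T"
    by (simp add: p_def mono_mult_def d_mono_def S_def T_def)
  consider "fst w l = 0 \<or> l \<in> T \<or> S \<inter> insert l T \<noteq> {}"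
    | "k \<in> S \<union> insert l T" | "fst u k + fst w k = 0"
    | "0 < fst w l" "l \<notin> T" "S \<inter> insert l T = {}" "k \<notin> S" "k \<notin> T" "k \<noteq> l"
      "fst u k + fst w k \<noteq> 0"
    by (cases "fst w l = 0 \<or> l \<in> T \<or> S \<inter> insert l T \<noteq> {}"; cases "k \<in> S \<union> insert l T";
        cases "fst u k + fst w k = 0") auto
  then show ?thesis
  proof cases
    case 1
    then have "?c = 0" "?rhs = 0"
      by (auto simp: d_coeff_def wedge_coeff_def d_mono_def dwedge_term_def S_def T_def)
    then show ?thesis by (simp only: mult_zero_left)
  next
    case 2
    then have "?e = 0" "?rhs = 0"
      by (auto simp: d_coeff_def dwedge_term_def snd_p[unfolded p_def] S_def T_def)
    then show ?thesis by (simp only: mult_zero_right)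
  next
    case 3
    then have "?e = 0"
      by (simp add: d_coeff_def mono_mult_def d_mono_def)
    with 3 show ?thesis by simp
  next
    case 4
    have fst_p: "fst p k = fst u k + fst w k"
      using 4 by (simp add: p_def mono_mult_def d_mono_def)
    have "d_mono p k = (\<lambda>m. fst u m + fst w m - ((if m = k then 1 else 0) + (if m = l then 1 else 0)),
                        insert k S \<union> insert l T)"
      using 4 by (auto simp: d_mono_def p_def mono_mult_def S_def T_def fun_eq_iff)
    then have rhs: "?rhs = of_nat (fst w l) * (of_nat (fst u k) + of_nat (fst w k))
                         * (if d_mono p k = v then pair_sign S T k l else 0)"
      using 4 by (simp add: dwedge_term_def S_def T_def)
    have "pair_sign S T k l
        = (-1) ^ (count_below T l + inversions S (insert l T) + count_below (S \<union> insert l T) k)"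
      using 4 assms by (intro pair_sign_eq_d_wedge_sign) (auto simp: S_def T_def)
    then show ?thesis
      unfolding rhs p_def[symmetric] using 4
      by (simp add: d_coeff_def wedge_coeff_def snd_p fst_p power_add S_def T_def d_mono_def)
  qed
qed

lemma dform_wedge_bas_dform_bas:
  assumes u: "valid_mono n u" and w: "valid_mono n w"
  shows "dform (wedge (bas u) (dform (bas w))) = dwedge u w"
proof
  fix v
  define Z where "Z k l = dwedge_term (snd u) (snd w) (\<lambda>m. fst u m + fst w m) k l v" for k l
  have "dform (wedge (bas u) (dform (bas w))) v
      = (\<Sum>l<n. d_coeff w l * wedge_coeff u (d_mono w l) * d_bas (mono_mult u (d_mono w l)) v)"
    unfolding wedge_bas_dform_bas[OF w] by (simp add: dform_eq_lin_ext lin_ext_lin_comb)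
  also have "\<dots> = (\<Sum>l<n. \<Sum>k<n. of_nat (fst w l) * (of_nat (fst u k) + of_nat (fst w k)) * Z k l)"
  proof (rule sum.cong[OF refl])
    fix l assume "l \<in> {..<n}"
    then have p: "valid_mono n (mono_mult u (d_mono w l))"
      using u w by (simp add: valid_mono_d_mono valid_mono_mono_mult)
    show "d_coeff w l * wedge_coeff u (d_mono w l) * d_bas (mono_mult u (d_mono w l)) v
        = (\<Sum>k<n. of_nat (fst w l) * (of_nat (fst u k) + of_nat (fst w k)) * Z k l)"
      unfolding d_bas_eq_lin_comb[OF p] lin_comb_def sum_distrib_left
      using u w by (simp add: d_wedge_dform_term finite_snd_valid_mono Z_def)
  qed
  also have "\<dots> = (\<Sum>k<n. \<Sum>l<n. of_nat (fst w l) * (of_nat (fst u k) + of_nat (fst w k)) * Z k l)"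
    by (rule sum.swap)
  also have "\<dots> = (\<Sum>k<n. \<Sum>l<n. of_nat (fst u k) * of_nat (fst w l) * Z k l
                                 + of_nat (fst w l) * of_nat (fst w k) * Z k l)"
    by (intro sum.cong refl) (simp add: algebra_simps)
  also have "\<dots> = dwedge u w v + (\<Sum>k<n. \<Sum>l<n. of_nat (fst w l) * of_nat (fst w k) * Z k l)"
    by (simp add: dwedge_eq_sum[OF u w] Z_def sum.distrib)
  also have "(\<Sum>k<n. \<Sum>l<n. of_nat (fst w l) * of_nat (fst w k) * Z k l) = (0 :: complex)"
  proof (rule double_sum_antisym)
    fix k l
    have "Z k l = - Z l k"
      unfolding Z_def using u w by (intro dwedge_term_swap) (auto simp: finite_snd_valid_mono)
    then show "of_nat (fst w l) * of_nat (fst w k) * Z k l = - (of_nat (fst w k) * of_nat (fst w l) * Z l k)"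
      by simp
  qed
  finally show "dform (wedge (bas u) (dform (bas w))) v = dwedge u w v" by simp
qed

lemma card_snd_supp_dwedge:
  assumes u: "valid_mono n u" and w: "valid_mono n w" and v: "v \<in> supp (dwedge u w)"
  shows "card (snd v) = card (snd u) + card (snd w) + 2"
proof -
  let ?t = "\<lambda>k l. of_nat (fst u k) * of_nat (fst w l)
      * dwedge_term (snd u) (snd w) (\<lambda>m. fst u m + fst w m) k l v"
  have "(\<Sum>k<n. \<Sum>l<n. ?t k l) \<noteq> 0"
    using v by (simp add: supp_def dwedge_eq_sum[OF u w])
  then obtain k where "(\<Sum>l<n. ?t k l) \<noteq> 0"
    by (meson sum.not_neutral_contains_not_neutral)
  then obtain l where "?t k l \<noteq> 0"
    by (meson sum.not_neutral_contains_not_neutral)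
  then have "k \<notin> snd u" "l \<notin> snd w" "insert k (snd u) \<inter> insert l (snd w) = {}"
    "snd v = insert k (snd u) \<union> insert l (snd w)"
    by (auto simp: dwedge_term_def split: if_splits)
  then show ?thesis
    using u w by (simp add: card_Un_disjoint finite_snd_valid_mono)
qed

lemma exact_pos_dwedge:
  assumes u: "valid_mono n u" and w: "valid_mono n w"
    and even: "even (card (snd u))" "even (card (snd w))"
  shows "exact_pos n (dwedge u w)"
proof -
  have "snd v \<noteq> {} \<and> even (card (snd v))" if "v \<in> supp (dwedge u w)" for v
    using card_snd_supp_dwedge[OF u w that] even by auto
  moreover have "exact_form n (dwedge u w)"
    unfolding exact_form_def
    using is_form_wedge_bas_dform_bas[OF u w] dform_wedge_bas_dform_bas[OF u w] by metis
  ultimately show ?thesis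
    by (simp add: exact_pos_def)
qed

lemma exact_pos_zero: "exact_pos n (\<lambda>_. 0)"
proof -
  have "supp (\<lambda>_. 0) = {}" by (simp add: supp_def)
  moreover have "dform (\<lambda>_. 0) = (\<lambda>_. 0)" by (simp add: dform_def supp_def)
  ultimately show ?thesis
    unfolding exact_pos_def exact_form_def is_form_def by (intro conjI exI[of _ "\<lambda>_. 0"]) auto
qed

lemma exact_pos_diff:
  assumes "exact_pos n \<omega>" "exact_pos n \<omega>'"
  shows "exact_pos n (\<lambda>v. \<omega> v - \<omega>' v)"
proof -
  obtain \<nu> \<nu>' where \<nu>: "is_form n \<nu>" "is_form n \<nu>'" "\<omega> = dform \<nu>" "\<omega>' = dform \<nu>'"
    using assms by (auto simp: exact_pos_def exact_form_def)
  have "finite (supp \<nu>)" "finite (supp \<nu>')"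
    using \<nu> by (simp_all add: is_form_def)
  then have "(\<lambda>v. \<omega> v - \<omega>' v) = dform (\<lambda>x. \<nu> x - \<nu>' x)"
    unfolding \<nu>(3,4) dform_eq_lin_ext by (simp add: fun_eq_iff lin_ext_diff)
  moreover have "is_form n (\<lambda>x. \<nu> x - \<nu>' x)"
  proof -
    have "supp (\<lambda>x. \<nu> x - \<nu>' x) \<subseteq> supp \<nu> \<union> supp \<nu>'"
      by (auto simp: supp_def)
    then show ?thesis
      using \<nu>(1,2) unfolding is_form_def by (meson Un_iff finite_Un finite_subset subsetD)
  qed
  moreover have "supp (\<lambda>v. \<omega> v - \<omega>' v) \<subseteq> supp \<omega> \<union> supp \<omega>'"
    by (auto simp: supp_def)
  ultimately show ?thesis
    using assms unfolding exact_pos_def exact_form_def by blast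
qed

section \<open>The action of \<open>x\<^sub>i\<^sub>j\<close> on tensors and the map \<open>\<phi>\<close>\<close>

definition mult_y_at :: "nat \<Rightarrow> nat \<Rightarrow> mono list \<Rightarrow> mono list" where
  "mult_y_at i p us = us[p := mult_y i (us ! p)]"

lemma length_mult_y_at [simp]: "length (mult_y_at i p us) = length us"
  by (simp add: mult_y_at_def)

lemma mult_y_at_0 [simp]: "mult_y_at i 0 (u # us) = mult_y i u # us"
  by (simp add: mult_y_at_def)

lemma mult_y_at_Suc_0 [simp]: "mult_y_at i (Suc 0) (u # w # us) = u # mult_y i w # us"
  by (simp add: mult_y_at_def)

lemma mult_y_at_eq_iff:
  assumes "p < length L"
  shows "mult_y_at i p L = us \<longleftrightarrow>
    p < length us \<and> 0 < fst (us ! p) i \<and> us[p := ((fst (us ! p))(i := fst (us ! p) i - 1), snd (us ! p))] = L"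
proof
  assume us: "mult_y_at i p L = us"
  then have "us ! p = mult_y i (L ! p)" "length us = length L"
    using assms by (auto simp: mult_y_at_def)
  then show "p < length us \<and> 0 < fst (us ! p) i \<and>
      us[p := ((fst (us ! p))(i := fst (us ! p) i - 1), snd (us ! p))] = L"
    using assms us by (auto simp: mult_y_def mult_y_at_def)
next
  assume h: "p < length us \<and> 0 < fst (us ! p) i \<and>
      us[p := ((fst (us ! p))(i := fst (us ! p) i - 1), snd (us ! p))] = L"
  let ?d = "((fst (us ! p))(i := fst (us ! p) i - 1), snd (us ! p))"
  have "L ! p = ?d" "mult_y i ?d = us ! p"
    using h by (auto simp: mult_y_def fun_eq_iff prod_eq_iff)
  then have "mult_y_at i p L = us[p := ?d, p := us ! p]"
    using h by (simp add: mult_y_at_def)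
  then show "mult_y_at i p L = us" by simp
qed

lemma xact_lin_comb:
  assumes "\<forall>k\<in>K. p < length (X k)"
  shows "xact i p (lin_comb K c X) = lin_comb K c (\<lambda>k. mult_y_at i p (X k))"
proof
  fix us
  have "xact i p (lin_comb K c X) us = (\<Sum>k\<in>K. if p < length us \<and> 0 < fst (us ! p) i \<and>
      us[p := ((fst (us ! p))(i := fst (us ! p) i - 1), snd (us ! p))] = X k then c k else 0)"
    unfolding xact_def lin_comb_def by (auto intro!: sum.cong)
  also have "\<dots> = lin_comb K c (\<lambda>k. mult_y_at i p (X k)) us"
    unfolding lin_comb_def using assms by (intro sum.cong refl) (simp add: mult_y_at_eq_iff)
  finally show "xact i p (lin_comb K c X) us = lin_comb K c (\<lambda>k. mult_y_at i p (X k)) us" .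
qed

lemma xact_diff: "xact i p (\<lambda>us. f us - g us) = (\<lambda>us. xact i p f us - xact i p g us)"
  by (simp add: xact_def fun_eq_iff)

text \<open>\<open>F\<close> applied to \<open>(x\<^sub>i\<^sub>1 - x\<^sub>i\<^sub>2)(x\<^sub>j\<^sub>1 - x\<^sub>j\<^sub>2) us\<close> for a basis tensor \<open>us\<close>.\<close>
definition xdiff2_comb :: "nat \<Rightarrow> nat \<Rightarrow> (mono list \<Rightarrow> 'b \<Rightarrow> complex) \<Rightarrow> mono list \<Rightarrow> 'b \<Rightarrow> complex" where
  "xdiff2_comb i j F us =
     (\<lambda>v. (F (mult_y_at i 0 (mult_y_at j 0 us)) v - F (mult_y_at i 0 (mult_y_at j 1 us)) v)
        - (F (mult_y_at i 1 (mult_y_at j 0 us)) v - F (mult_y_at i 1 (mult_y_at j 1 us)) v))"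

lemma xdiff2_comb_Cons_Cons:
  "xdiff2_comb i j F (u # w # us) = xdiff2_pair i j (\<lambda>a b. F (a # b # us)) u w"
  by (simp add: xdiff2_comb_def xdiff2_pair_def)

lemma lin_ext_xdiff2_lin_comb:
  assumes K: "finite K" and len: "\<forall>k\<in>K. 1 < length (X k)"
  shows "lin_ext F (xdiff i (xdiff j (lin_comb K c X))) v = (\<Sum>k\<in>K. c k * xdiff2_comb i j F (X k) v)"
proof -
  have len0: "\<forall>k\<in>K. 0 < length (X k)" "\<forall>k\<in>K. 1 < length (X k)"
    using len by auto
  have len1: "\<forall>k\<in>K. 0 < length (mult_y_at j q (X k))" "\<forall>k\<in>K. 1 < length (mult_y_at j q (X k))" for q
    using len by auto
  have "xdiff i (xdiff j (lin_comb K c X)) = (\<lambda>us.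
      (lin_comb K c (\<lambda>k. mult_y_at i 0 (mult_y_at j 0 (X k))) us
         - lin_comb K c (\<lambda>k. mult_y_at i 0 (mult_y_at j 1 (X k))) us)
    - (lin_comb K c (\<lambda>k. mult_y_at i 1 (mult_y_at j 0 (X k))) us
         - lin_comb K c (\<lambda>k. mult_y_at i 1 (mult_y_at j 1 (X k))) us))"
    unfolding xdiff_def xact_lin_comb[OF len0(1)] xact_lin_comb[OF len0(2)] xact_diff
      xact_lin_comb[OF len1(1)] xact_lin_comb[OF len1(2)] ..
  then show ?thesis
    using K by (simp add: lin_ext_diff finite_supp_diff finite_supp_lin_comb lin_ext_lin_comb
        xdiff2_comb_def sum_subtractf right_diff_distrib)
qed

lemma tens_pair_eq_lin_comb:
  assumes "finite (supp \<omega>1)" "finite (supp \<omega>2)"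
  shows "tens [\<omega>1, \<omega>2] = lin_comb (supp \<omega>1 \<times> supp \<omega>2) (\<lambda>(u, w). \<omega>1 u * \<omega>2 w) (\<lambda>(u, w). [u, w])"
proof
  fix us
  show "tens [\<omega>1, \<omega>2] us = lin_comb (supp \<omega>1 \<times> supp \<omega>2) (\<lambda>(u, w). \<omega>1 u * \<omega>2 w) (\<lambda>(u, w). [u, w]) us"
  proof (cases "length us = 2")
    case True
    then obtain u w where us: "us = [u, w]"
      by (metis (no_types, lifting) One_nat_def Suc_length_conv length_0_conv numeral_2_eq_2)
    have "lin_comb (supp \<omega>1 \<times> supp \<omega>2) (\<lambda>(u, w). \<omega>1 u * \<omega>2 w) (\<lambda>(u, w). [u, w]) us
        = (\<Sum>p\<in>supp \<omega>1 \<times> supp \<omega>2. if p = (u, w) then \<omega>1 u * \<omega>2 w else 0)"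
      unfolding lin_comb_def us by (intro sum.cong refl) auto
    also have "\<dots> = \<omega>1 u * \<omega>2 w"
      using assms by (simp add: supp_def)
    finally show ?thesis
      unfolding us tens_def by (simp add: lessThan_Suc)
  next
    case False
    then show ?thesis
      unfolding tens_def lin_comb_def by (auto intro!: sum.neutral split: prod.splits)
  qed
qed

lemma phi_xdiff2_tens:
  assumes "is_form n \<omega>1" "is_form n \<omega>2" "i < n" "j < n"
  shows "phi (xdiff i (xdiff j (tens [\<omega>1, \<omega>2]))) = (\<lambda>_. 0)"
proof
  fix v
  let ?K = "supp \<omega>1 \<times> supp \<omega>2"
  let ?G = "\<lambda>us. if length us = 2 then wedge (dform (bas (us ! 0))) (dform (bas (us ! 1))) else (\<lambda>_. 0)"
  have fin: "finite (supp \<omega>1)" "finite (supp \<omega>2)"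
    using assms by (simp_all add: is_form_def)
  have "phi (xdiff i (xdiff j (tens [\<omega>1, \<omega>2]))) v
      = (\<Sum>(u, w)\<in>?K. \<omega>1 u * \<omega>2 w * xdiff2_comb i j ?G [u, w] v)"
    unfolding phi_eq_lin_ext tens_pair_eq_lin_comb[OF fin]
    using fin by (subst lin_ext_xdiff2_lin_comb) (auto simp: case_prod_beta)
  also have "\<dots> = 0"
  proof (intro sum.neutral ballI)
    fix p assume p: "p \<in> ?K"
    obtain u w where uw: "p = (u, w)" by (cases p)
    have "valid_mono n u" "valid_mono n w"
      using p uw assms by (auto simp: is_form_def)
    then have "xdiff2_pair i j dwedge u w v = 0"
      using assms by (simp add: dwedge_xdiff2_cancel)
    then show "(case p of (u, w) \<Rightarrow> \<omega>1 u * \<omega>2 w * xdiff2_comb i j ?G [u, w] v) = 0"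
      by (simp add: uw xdiff2_comb_Cons_Cons dwedge_def[symmetric])
  qed
  finally show "phi (xdiff i (xdiff j (tens [\<omega>1, \<omega>2]))) v = 0" .
qed

section \<open>Lower central series and the Feigin--Shoikhet maps\<close>

lemma lcs_index_ge_1: "lcs n k p \<Longrightarrow> 1 \<le> k"
  by (induction rule: lcs.induct) auto

lemma lcs_diff: "lcs n k p \<Longrightarrow> lcs n k q \<Longrightarrow> lcs n k (\<lambda>w. p w - q w)"
  using lcs.add[of n k p "\<lambda>w. (-1) * q w"] lcs.smult[of n k q "-1"] by simp

lemma lcs_sum:
  assumes "finite A" "1 \<le> k" "\<And>x. x \<in> A \<Longrightarrow> lcs n k (f x)"
  shows "lcs n k (\<lambda>w. \<Sum>x\<in>A. f x w)"
  using assms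
proof (induction A rule: finite_induct)
  case empty
  then show ?case using lcs.zero[of k n] by simp
next
  case (insert x A)
  then show ?case using lcs.add[of n k "f x" "\<lambda>w. \<Sum>x\<in>A. f x w"] by simp
qed

lemma acomm_diff_left: "acomm (\<lambda>w. p w - q w) r = (\<lambda>w. acomm p r w - acomm q r w)"
  by (simp add: acomm_def amul_def fun_eq_iff algebra_simps sum_subtractf)

lemma foldl_acomm_diff:
  "foldl acomm (\<lambda>w. p w - q w) rs = (\<lambda>w. foldl acomm p rs w - foldl acomm q rs w)"
  by (induction rs arbitrary: p q) (simp_all add: acomm_diff_left)

lemma lcs_foldl_acomm:
  assumes "lcs n k b" "\<forall>r\<in>set rs. is_alg n r"
  shows "lcs n (k + length rs) (foldl acomm b rs)"
  using assms
proof (induction rs arbitrary: b k)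
  case Nil
  then show ?case by simp
next
  case (Cons r rs)
  have "lcs n (Suc k) (acomm r b)"
    using Cons.prems lcs_index_ge_1 by (intro lcs.comm) auto
  from lcs.smult[OF this, of "-1"] have "lcs n (Suc k) (acomm b r)"
    by (simp add: acomm_def)
  with Cons.IH Cons.prems(2) show ?case by fastforce
qed

definition lcs_mod :: "nat \<Rightarrow> nat \<Rightarrow> nc \<Rightarrow> nc \<Rightarrow> bool" where
  "lcs_mod n k p q \<longleftrightarrow> lcs n k (\<lambda>w. p w - q w)"

lemma lcs_mod_trans [trans]: "lcs_mod n k p q \<Longrightarrow> lcs_mod n k q r \<Longrightarrow> lcs_mod n k p r"
  unfolding lcs_mod_def using lcs.add[of n k "\<lambda>w. p w - q w" "\<lambda>w. q w - r w"] by simp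

lemma lcs_mod_diff:
  "lcs_mod n k p p' \<Longrightarrow> lcs_mod n k q q' \<Longrightarrow> lcs_mod n k (\<lambda>w. p w - q w) (\<lambda>w. p' w - q' w)"
  unfolding lcs_mod_def by (drule (1) lcs_diff) (simp add: algebra_simps)

lemma lcs_mod_0_iff: "lcs_mod n k p (\<lambda>_. 0) \<longleftrightarrow> lcs n k p"
  by (simp add: lcs_mod_def)

lemma FS_dataD:
  assumes "FS_data n \<xi> \<eta>"
  shows FS_data_xi_alg: "even_form n \<omega> \<Longrightarrow> is_alg n (\<xi> \<omega>)"
    and FS_data_eta_add: "exact_pos n \<omega> \<Longrightarrow> exact_pos n \<omega>' \<Longrightarrow>
        lcs n 3 (\<lambda>w. \<eta> (\<lambda>v. \<omega> v + \<omega>' v) w - \<eta> \<omega> w - \<eta> \<omega>' w)"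
    and FS_data_eta_smult: "exact_pos n \<omega> \<Longrightarrow> lcs n 3 (\<lambda>w. \<eta> (\<lambda>v. c * \<omega> v) w - c * \<eta> \<omega> w)"
    and FS_data_bracket: "even_form n \<omega>1 \<Longrightarrow> even_form n \<omega>2 \<Longrightarrow>
        lcs_mod n 3 (acomm (\<xi> \<omega>1) (\<xi> \<omega>2)) (\<eta> (wedge (dform \<omega>1) (dform \<omega>2)))"
  using assms unfolding FS_data_def lcs_mod_def by blast+

lemma eta_zero: "FS_data n \<xi> \<eta> \<Longrightarrow> lcs n 3 (\<eta> (\<lambda>_. 0))"
  using FS_data_eta_smult[OF _ exact_pos_zero, of n \<xi> \<eta> 0] by simp

lemma eta_diff:
  assumes F: "FS_data n \<xi> \<eta>" and "exact_pos n \<omega>" "exact_pos n \<omega>'"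
  shows "lcs_mod n 3 (\<lambda>w. \<eta> \<omega> w - \<eta> \<omega>' w) (\<eta> (\<lambda>v. \<omega> v - \<omega>' v))"
proof -
  have "lcs n 3 (\<lambda>w. \<eta> (\<lambda>v. (\<omega> v - \<omega>' v) + \<omega>' v) w - \<eta> (\<lambda>v. \<omega> v - \<omega>' v) w - \<eta> \<omega>' w)"
    using assms by (intro FS_data_eta_add[OF F] exact_pos_diff)
  then show ?thesis
    by (simp add: lcs_mod_def algebra_simps)
qed

lemma even_form_bas: "valid_mono n u \<Longrightarrow> even (card (snd u)) \<Longrightarrow> even_form n (bas u)"
  by (simp add: even_form_def is_form_def supp_bas)

lemma bracket_xdiff2_in_lcs3:
  assumes F: "FS_data n \<xi> \<eta>" and ij: "i < n" "j < n"
    and u: "valid_mono n u" "even (card (snd u))" and w: "valid_mono n w" "even (card (snd w))"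
  shows "lcs n 3 (xdiff2_pair i j (\<lambda>a b. acomm (\<xi> (bas a)) (\<xi> (bas b))) u w)"
proof -
  define W where "W a b = dwedge a b" for a b
  define u\<^sub>1 w\<^sub>1 u\<^sub>2 w\<^sub>2 u\<^sub>3 w\<^sub>3 u\<^sub>4 w\<^sub>4 where
    u\<^sub>1_def: "u\<^sub>1 = mult_y i (mult_y j u)" and w\<^sub>1_def: "w\<^sub>1 = w"
    and u\<^sub>2_def: "u\<^sub>2 = mult_y i u" and w\<^sub>2_def: "w\<^sub>2 = mult_y j w"
    and u\<^sub>3_def: "u\<^sub>3 = mult_y j u" and w\<^sub>3_def: "w\<^sub>3 = mult_y i w"
    and u\<^sub>4_def: "u\<^sub>4 = u" and w\<^sub>4_def: "w\<^sub>4 = mult_y i (mult_y j w)"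
  have pairs: "valid_mono n a \<and> even (card (snd a)) \<and> valid_mono n b \<and> even (card (snd b))"
    if "(a, b) \<in> {(u\<^sub>1, w\<^sub>1), (u\<^sub>2, w\<^sub>2), (u\<^sub>3, w\<^sub>3), (u\<^sub>4, w\<^sub>4)}" for a b
    using that u w ij by (auto simp: u\<^sub>1_def w\<^sub>1_def u\<^sub>2_def w\<^sub>2_def u\<^sub>3_def w\<^sub>3_def u\<^sub>4_def w\<^sub>4_def
        valid_mono_mult_y)
  have bracket: "lcs_mod n 3 (acomm (\<xi> (bas a)) (\<xi> (bas b))) (\<eta> (W a b))"
    if "(a, b) \<in> {(u\<^sub>1, w\<^sub>1), (u\<^sub>2, w\<^sub>2), (u\<^sub>3, w\<^sub>3), (u\<^sub>4, w\<^sub>4)}" for a b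
    using FS_data_bracket[OF F] even_form_bas pairs[OF that] by (simp add: W_def dwedge_def)
  have exact: "exact_pos n (W a b)"
    if "(a, b) \<in> {(u\<^sub>1, w\<^sub>1), (u\<^sub>2, w\<^sub>2), (u\<^sub>3, w\<^sub>3), (u\<^sub>4, w\<^sub>4)}" for a b
    using exact_pos_dwedge pairs[OF that] by (simp add: W_def)
  have split: "xdiff2_pair i j G u w
      = (\<lambda>v. (G u\<^sub>1 w\<^sub>1 v - G u\<^sub>2 w\<^sub>2 v) - (G u\<^sub>3 w\<^sub>3 v - G u\<^sub>4 w\<^sub>4 v))" for G :: "mono \<Rightarrow> mono \<Rightarrow> 'b \<Rightarrow> complex"
    by (simp add: xdiff2_pair_def u\<^sub>1_def w\<^sub>1_def u\<^sub>2_def w\<^sub>2_def u\<^sub>3_def w\<^sub>3_def u\<^sub>4_def w\<^sub>4_def)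
  have "lcs_mod n 3 (xdiff2_pair i j (\<lambda>a b. acomm (\<xi> (bas a)) (\<xi> (bas b))) u w)
                    (xdiff2_pair i j (\<lambda>a b. \<eta> (W a b)) u w)"
    unfolding split by (intro lcs_mod_diff bracket) simp_all
  also have "lcs_mod n 3 \<dots> (\<lambda>x. \<eta> (\<lambda>v. W u\<^sub>1 w\<^sub>1 v - W u\<^sub>2 w\<^sub>2 v) x - \<eta> (\<lambda>v. W u\<^sub>3 w\<^sub>3 v - W u\<^sub>4 w\<^sub>4 v) x)"
    unfolding split by (rule lcs_mod_diff; rule eta_diff[OF F]; rule exact; simp)
  also have "lcs_mod n 3 \<dots> (\<eta> (xdiff2_pair i j W u w))"
    unfolding split by (rule eta_diff[OF F]; rule exact_pos_diff; rule exact; simp)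
  also have "xdiff2_pair i j W u w = (\<lambda>_. 0)"
    unfolding W_def using u w ij by (intro dwedge_xdiff2_cancel)
  also have "lcs_mod n 3 (\<eta> (\<lambda>_. 0)) (\<lambda>_. 0)"
    using eta_zero[OF F] by (simp only: lcs_mod_0_iff)
  finally show ?thesis
    by (simp only: lcs_mod_0_iff)
qed

lemma psi_basis_xdiff2_in_lcs:
  assumes F: "FS_data n \<xi> \<eta>" and ij: "i < n" "j < n"
    and us: "2 \<le> length us" "\<forall>u\<in>set us. valid_mono n u \<and> even (card (snd u))"
  shows "lcs n (Suc (length us)) (xdiff2_comb i j (\<lambda>us. iterbr (map (\<lambda>u. \<xi> (bas u)) us)) us)"
proof -
  obtain u w rest where us_eq: "us = u # w # rest"
    using us(1) by (metis One_nat_def Suc_1 Suc_le_length_iff)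
  let ?B = "\<lambda>a b. acomm (\<xi> (bas a)) (\<xi> (bas b))"
  let ?R = "map (\<lambda>u. \<xi> (bas u)) rest"
  have "xdiff2_comb i j (\<lambda>us. iterbr (map (\<lambda>u. \<xi> (bas u)) us)) us = foldl acomm (xdiff2_pair i j ?B u w) ?R"
    by (simp add: us_eq xdiff2_comb_Cons_Cons xdiff2_pair_def foldl_acomm_diff)
  moreover have "lcs n (3 + length ?R) (foldl acomm (xdiff2_pair i j ?B u w) ?R)"
    using us(2) FS_data_xi_alg[OF F] even_form_bas
    by (intro lcs_foldl_acomm bracket_xdiff2_in_lcs3[OF F ij]) (auto simp: us_eq)
  ultimately show ?thesis
    by (simp add: us_eq eval_nat_numeral)
qed

lemma psi_xdiff2_in_lcs:
  assumes F: "FS_data n \<xi> \<eta>" and m: "2 \<le> m" and ij: "i < n" "j < n" and T: "is_tensor n m T"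
  shows "lcs n (Suc m) (psi \<xi> (xdiff i (xdiff j T)))"
proof -
  let ?H = "\<lambda>us. iterbr (map (\<lambda>u. \<xi> (bas u)) us)"
  have fin: "finite (supp T)" and basis: "\<And>us. us \<in> supp T \<Longrightarrow>
      length us = m \<and> (\<forall>u\<in>set us. valid_mono n u \<and> even (card (snd u)))"
    using T by (auto simp: is_tensor_def)
  have psi_eq: "psi \<xi> (xdiff i (xdiff j T)) = (\<lambda>x. \<Sum>us\<in>supp T. T us * xdiff2_comb i j ?H us x)"
  proof
    fix x
    have "\<forall>us\<in>supp T. 1 < length (id us)"
      using basis m by auto
    then show "psi \<xi> (xdiff i (xdiff j T)) x = (\<Sum>us\<in>supp T. T us * xdiff2_comb i j ?H us x)"
      unfolding psi_eq_lin_ext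
      by (subst (1) lin_comb_supp_self[OF fin, symmetric]) (simp add: lin_ext_xdiff2_lin_comb[OF fin])
  qed
  show ?thesis
    unfolding psi_eq
  proof (rule lcs_sum[OF fin])
    fix us assume "us \<in> supp T"
    with basis m psi_basis_xdiff2_in_lcs[OF F ij, of us]
    show "lcs n (Suc m) (\<lambda>x. T us * xdiff2_comb i j ?H us x)"
      by (auto intro: lcs.smult)
  qed simp
qed

theorem lemma3p1:
  fixes n :: nat
  shows "(\<forall>i j \<omega>1 \<omega>2. i < n \<longrightarrow> j < n \<longrightarrow> even_form n \<omega>1 \<longrightarrow> even_form n \<omega>2 \<longrightarrow>
            phi (xdiff i (xdiff j (tens [\<omega>1, \<omega>2]))) = (\<lambda>_. 0)) \<and>
         (\<forall>\<xi> \<eta>. FS_data n \<xi> \<eta> \<longrightarrow>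
            (\<forall>m i j T. 2 \<le> m \<longrightarrow> i < n \<longrightarrow> j < n \<longrightarrow> is_tensor n m T \<longrightarrow>
               lcs n (Suc m) (psi \<xi> (xdiff i (xdiff j T)))))"
  by (auto simp: even_form_def intro: phi_xdiff2_tens psi_xdiff2_in_lcs)

end
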